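(* Let $G$ be a group acting without inversions on a tree $T$ and let $A\subseteq B$ be subgroups of $G$, both containing hyperbolic elements. Let $v$ be a vertex of $T_{A}$ (so also of $T_B$), and consider the graph map $\pi_{B}:T_{A}/A \to T_{B}/B$, $[x]_{A}\mapsto[x]_{B}$. \begin{enumerate} \item If the stars are finite, then $|Star([v]_{A})|\leq |G_{v}\cap B|\cdot |Star([v]_{B})|$. \item If moreover $v$ is $B$-degenerate and $B_{v}$ stabilizes each edge of $T_B$ with initial vertex $v$, then the restriction $\pi_{B}: Star([v]_{A}) \to Star([v]_{B})$ is injective. \end{enumerate}
   Context: $T_A\subseteq T_B$ denote the unique minimal invariant subtrees of $A$ and $B$. $Star([v]_A)$ is the set of edges of $T_A/A$ with initial vertex $[v]_A$, and $Star([v]_B)$ the set of edges of $T_B/B$ with initial vertex $[v]_B$. A vertex $v$ is $B$-degenerate if $B_v=B_e$ for some edge $e$ of $T_B$ with initial vertex $v$. *)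

theory Defs
  imports "HOL-Algebra.Group_Action" "HOL-Library.Extended_Nat"
begin

text \<open>A tree is modelled as a simplicial graph: vertex set V and a symmetric,
irreflexive adjacency relation adj; the (oriented) edges are the ordered pairs
(x,y) with adj x y, the origin (initial vertex) of (x,y) is x.  A tree is a
nonempty connected graph without circuits, i.e. any two vertices are joined by
exactly one reduced (non-backtracking) path.\<close>

definition reduced_path :: "('v \<Rightarrow> 'v \<Rightarrow> bool) \<Rightarrow> 'v list \<Rightarrow> 'v \<Rightarrow> 'v \<Rightarrow> bool" where
  "reduced_path adj xs x y \<longleftrightarrow>
     xs \<noteq> [] \<and> hd xs = x \<and> last xs = y \<and>
     (\<forall>i. i + 1 < length xs \<longrightarrow> adj (xs ! i) (xs ! (i + 1))) \<and>
     (\<forall>i. i + 2 < length xs \<longrightarrow> xs ! i \<noteq> xs ! (i + 2))"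

definition is_tree :: "'v set \<Rightarrow> ('v \<Rightarrow> 'v \<Rightarrow> bool) \<Rightarrow> bool" where
  "is_tree V adj \<longleftrightarrow>
     V \<noteq> {} \<and>
     (\<forall>x y. adj x y \<longrightarrow> x \<in> V \<and> y \<in> V) \<and>
     (\<forall>x y. adj x y \<longrightarrow> adj y x) \<and>
     (\<forall>x. \<not> adj x x) \<and>
     (\<forall>x\<in>V. \<forall>y\<in>V. \<exists>!xs. reduced_path adj xs x y)"

definition tree_action :: "('g, 'm) monoid_scheme \<Rightarrow> 'v set \<Rightarrow> ('v \<Rightarrow> 'v \<Rightarrow> bool) \<Rightarrow> ('g \<Rightarrow> 'v \<Rightarrow> 'v) \<Rightarrow> bool" where
  "tree_action G V adj \<phi> \<longleftrightarrow>
     group_action G V \<phi> \<and> is_tree V adj \<and>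
     (\<forall>g\<in>carrier G. \<forall>x\<in>V. \<forall>y\<in>V. adj (\<phi> g x) (\<phi> g y) \<longleftrightarrow> adj x y)"

definition without_inversions :: "('g, 'm) monoid_scheme \<Rightarrow> ('v \<Rightarrow> 'v \<Rightarrow> bool) \<Rightarrow> ('g \<Rightarrow> 'v \<Rightarrow> 'v) \<Rightarrow> bool" where
  "without_inversions G adj \<phi> \<longleftrightarrow>
     (\<forall>g\<in>carrier G. \<forall>x y. adj x y \<longrightarrow> \<not> (\<phi> g x = y \<and> \<phi> g y = x))"

text \<open>Elliptic = fixes a point of T (for actions without inversions: fixes a vertex);
hyperbolic = not elliptic.\<close>
definition hyperbolic :: "('g, 'm) monoid_scheme \<Rightarrow> 'v set \<Rightarrow> ('g \<Rightarrow> 'v \<Rightarrow> 'v) \<Rightarrow> 'g \<Rightarrow> bool" where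
  "hyperbolic G V \<phi> g \<longleftrightarrow> g \<in> carrier G \<and> \<not> (\<exists>x\<in>V. \<phi> g x = x)"

text \<open>Subtree: nonempty set of vertices, closed under reduced paths (hence the
induced subgraph is a tree).\<close>
definition is_subtree :: "'v set \<Rightarrow> ('v \<Rightarrow> 'v \<Rightarrow> bool) \<Rightarrow> 'v set \<Rightarrow> bool" where
  "is_subtree V adj S \<longleftrightarrow> S \<noteq> {} \<and> S \<subseteq> V \<and>
     (\<forall>x\<in>S. \<forall>y\<in>S. \<forall>xs. reduced_path adj xs x y \<longrightarrow> set xs \<subseteq> S)"

definition invariant_set :: "'g set \<Rightarrow> ('g \<Rightarrow> 'v \<Rightarrow> 'v) \<Rightarrow> 'v set \<Rightarrow> bool" where
  "invariant_set A \<phi> S \<longleftrightarrow> (\<forall>a\<in>A. \<forall>x\<in>S. \<phi> a x \<in> S)"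

definition min_invariant_subtree ::
  "'v set \<Rightarrow> ('v \<Rightarrow> 'v \<Rightarrow> bool) \<Rightarrow> 'g set \<Rightarrow> ('g \<Rightarrow> 'v \<Rightarrow> 'v) \<Rightarrow> 'v set \<Rightarrow> bool" where
  "min_invariant_subtree V adj A \<phi> S \<longleftrightarrow>
     is_subtree V adj S \<and> invariant_set A \<phi> S \<and>
     (\<forall>S'. is_subtree V adj S' \<and> invariant_set A \<phi> S' \<and> S' \<subseteq> S \<longrightarrow> S' = S)"

text \<open>Vertex orbits [x]_A and edge orbits (edges of the quotient graph).\<close>
definition vorbit :: "'g set \<Rightarrow> ('g \<Rightarrow> 'v \<Rightarrow> 'v) \<Rightarrow> 'v \<Rightarrow> 'v set" where
  "vorbit A \<phi> x = {\<phi> a x | a. a \<in> A}"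

definition eorbit :: "'g set \<Rightarrow> ('g \<Rightarrow> 'v \<Rightarrow> 'v) \<Rightarrow> 'v \<times> 'v \<Rightarrow> ('v \<times> 'v) set" where
  "eorbit A \<phi> e = {(\<phi> a (fst e), \<phi> a (snd e)) | a. a \<in> A}"

text \<open>Star([v]_A): the edges of T_S/A (T_S the subtree with vertex set S) whose
initial vertex is [v]_A.\<close>
definition qstar :: "('v \<Rightarrow> 'v \<Rightarrow> bool) \<Rightarrow> 'g set \<Rightarrow> ('g \<Rightarrow> 'v \<Rightarrow> 'v) \<Rightarrow> 'v set \<Rightarrow> 'v \<Rightarrow> ('v \<times> 'v) set set" where
  "qstar adj A \<phi> S v =
     {eorbit A \<phi> (x, y) | x y. x \<in> S \<and> y \<in> S \<and> adj x y \<and> x \<in> vorbit A \<phi> v}"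

text \<open>The graph map pi_B on edges: an A-orbit of edges goes to the B-orbit
containing it (for A \<subseteq> B this is the B-saturation).\<close>
definition qmap_edge :: "'g set \<Rightarrow> ('g \<Rightarrow> 'v \<Rightarrow> 'v) \<Rightarrow> ('v \<times> 'v) set \<Rightarrow> ('v \<times> 'v) set" where
  "qmap_edge B \<phi> Eo = (\<Union>e\<in>Eo. eorbit B \<phi> e)"

definition vstab :: "'g set \<Rightarrow> ('g \<Rightarrow> 'v \<Rightarrow> 'v) \<Rightarrow> 'v \<Rightarrow> 'g set" where
  "vstab B \<phi> v = {b \<in> B. \<phi> b v = v}"

definition estab :: "'g set \<Rightarrow> ('g \<Rightarrow> 'v \<Rightarrow> 'v) \<Rightarrow> 'v \<times> 'v \<Rightarrow> 'g set" where
  "estab B \<phi> e = {b \<in> B. \<phi> b (fst e) = fst e \<and> \<phi> b (snd e) = snd e}"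

definition degenerate :: "('v \<Rightarrow> 'v \<Rightarrow> bool) \<Rightarrow> 'g set \<Rightarrow> ('g \<Rightarrow> 'v \<Rightarrow> 'v) \<Rightarrow> 'v set \<Rightarrow> 'v \<Rightarrow> bool" where
  "degenerate adj B \<phi> SB v \<longleftrightarrow>
     (\<exists>y\<in>SB. adj v y \<and> vstab B \<phi> v = estab B \<phi> (v, y))"

definition ecard :: "'a set \<Rightarrow> enat" where
  "ecard S = (if finite S then enat (card S) else \<infinity>)"

end

theory Submission
  imports Defs
begin

text \<open>Both parts are counting and injectivity arguments on edge orbits at \<open>v\<close>, once one knows
\<open>T\<^sub>A \<subseteq> T\<^sub>B\<close>.  For that inclusion, suppose \<open>T\<^sub>A\<close> and \<open>T\<^sub>B\<close> were disjoint: a hyperbolic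
\<open>h \<in> A\<close> preserves both subtrees, so it maps the shortest path between them to another shortest
path, whose initial vertex in \<open>T\<^sub>A\<close> must be the same, i.e. \<open>h\<close> fixes a vertex.  Hence
\<open>T\<^sub>A \<inter> T\<^sub>B\<close> is a nonempty \<open>A\<close>-invariant subtree of \<open>T\<^sub>A\<close> and equals \<open>T\<^sub>A\<close> by minimality.
Every \<open>A\<close>-orbit of edges at \<open>v\<close> is then the orbit of \<open>(v, b y)\<close> for a fixed representative
\<open>(v, y)\<close> of a \<open>B\<close>-orbit and some \<open>b \<in> B\<^sub>v\<close>, which gives the bound; and if \<open>B\<^sub>v\<close> fixes
every edge at \<open>v\<close>, two \<open>A\<close>-orbits at \<open>v\<close> in the same \<open>B\<close>-orbit coincide.\<close>

lemma reduced_path_length_ge2: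
  "reduced_path adj xs x y \<Longrightarrow> x \<noteq> y \<Longrightarrow> 2 \<le> length xs"
  unfolding reduced_path_def
  by (metis One_nat_def Suc_1 hd_conv_nth last_conv_nth le_less_linear length_0_conv less_2_cases
      diff_Suc_1)

lemma reduced_path_tl:
  assumes "reduced_path adj xs x y" "2 \<le> length xs"
  shows "reduced_path adj (tl xs) (xs ! 1) y"
proof -
  obtain a ys where xs: "xs = a # ys" and "ys \<noteq> []"
    using assms(2) by (cases xs) fastforce+
  then show ?thesis using assms(1) unfolding reduced_path_def by (auto simp: hd_conv_nth)
qed

lemma reduced_path_butlast:
  assumes "reduced_path adj xs x y" "2 \<le> length xs"
  shows "reduced_path adj (butlast xs) x (xs ! (length xs - 2))"
proof -
  obtain a ys where xs: "xs = ys @ [a]" and ys: "ys \<noteq> []"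
    using assms(2) by (cases xs rule: rev_cases) fastforce+
  show ?thesis using assms(1) ys unfolding xs reduced_path_def
    apply (auto simp: nth_append last_conv_nth)
    subgoal for i by (drule spec[where x = i]) auto
    subgoal for i by (drule spec[where x = i], drule spec[where x = i]) auto
    done
qed

lemma nth_append_tl:
  assumes "xs \<noteq> []" "ys \<noteq> []" "last xs = hd ys" "length xs - 1 \<le> k" "k < length xs + length ys - 1"
  shows "(xs @ tl ys) ! k = ys ! (k + 1 - length xs)"
proof (cases "k < length xs")
  case True
  then have "k = length xs - 1" using assms by simp
  then show ?thesis using assms by (simp add: nth_append last_conv_nth hd_conv_nth)
next
  case False
  then show ?thesis using assms by (simp add: nth_append nth_tl Suc_diff_le)
qed

lemma reduced_path_append:
  assumes xs: "reduced_path adj xs x y" and ys: "reduced_path adj ys y z"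
    and len: "2 \<le> length xs" "2 \<le> length ys" and junction: "xs ! (length xs - 2) \<noteq> ys ! 1"
  shows "reduced_path adj (xs @ tl ys) x z"
proof -
  let ?n = "length xs" and ?m = "length ys" and ?zs = "xs @ tl ys"
  have ne: "xs \<noteq> []" "ys \<noteq> []" "tl ys \<noteq> []" using len by (auto simp: tl_Nil)
  have glue: "last xs = hd ys" using xs ys unfolding reduced_path_def by simp
  have len_zs: "length ?zs = ?n + ?m - 1" using len by simp
  have left: "?zs ! k = xs ! k" if "k < ?n" for k using that by (simp add: nth_append)
  have right: "?zs ! k = ys ! (k + 1 - ?n)" if "?n - 1 \<le> k" "k < ?n + ?m - 1" for k
    using nth_append_tl[OF ne(1,2) glue that] .
  show ?thesis unfolding reduced_path_def
  proof (intro conjI allI impI)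
    show "?zs \<noteq> []" "hd ?zs = x" "last ?zs = z"
      using xs ys ne unfolding reduced_path_def by (auto simp: last_tl)
  next
    fix i assume "i + 1 < length ?zs"
    then show "adj (?zs ! i) (?zs ! (i + 1))"
      using xs ys left[of i] left[of "i + 1"] right[of i] right[of "i + 1"] len_zs
      unfolding reduced_path_def by (cases "i + 1 < ?n") (auto simp: Suc_diff_le)
  next
    fix i assume i: "i + 2 < length ?zs"
    consider "i + 2 < ?n" | "i + 2 = ?n" | "?n < i + 2" by linarith
    then show "?zs ! i \<noteq> ?zs ! (i + 2)"
    proof cases
      case 1
      then show ?thesis using xs left[of i] left[of "i + 2"] unfolding reduced_path_def by simp
    next
      case 2
      then show ?thesis
        using junction left[of i] right[of "i + 2"] i len_zs by (auto simp flip: 2)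
    next
      case 3
      then have "?zs ! i = ys ! (i + 1 - ?n)" "?zs ! (i + 2) = ys ! (i + 1 - ?n + 2)"
        using right[of i] right[of "i + 2"] i len_zs by (auto simp: Suc_diff_le)
      moreover have "i + 1 - ?n + 2 < ?m" using i len_zs 3 by simp
      ultimately show ?thesis using ys unfolding reduced_path_def by simp
    qed
  qed
qed

lemma reduced_path_map:
  assumes "inj_on f V" "\<forall>x\<in>V. \<forall>y\<in>V. adj (f x) (f y) \<longleftrightarrow> adj x y" "set xs \<subseteq> V"
    "reduced_path adj xs x y"
  shows "reduced_path adj (map f xs) (f x) (f y)"
  using assms unfolding reduced_path_def
  apply (auto simp: hd_map last_map)
  subgoal for i
    using nth_mem[of i xs] nth_mem[of "Suc i" xs] by (simp add: subset_iff)
  subgoal for i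
    using nth_mem[of i xs] nth_mem[of "Suc (Suc i)" xs] inj_on_eq_iff[of f V]
    by (simp add: subset_iff)
  done

lemma reduced_path_subset:
  assumes "is_tree V adj" "reduced_path adj xs x y" "x \<in> V"
  shows "set xs \<subseteq> V"
proof
  fix w assume "w \<in> set xs"
  then obtain i where i: "i < length xs" "w = xs ! i" by (auto simp: in_set_conv_nth)
  consider "i = 0" | "i + 1 < length xs" | k where "i = Suc k"
    by (cases i) auto
  then show "w \<in> V"
  proof cases
    case 1
    then show ?thesis using assms(2,3) i unfolding reduced_path_def by (metis hd_conv_nth)
  next
    case 2
    then have "adj (xs ! i) (xs ! (i + 1))" using assms(2) unfolding reduced_path_def by blast
    then show ?thesis using assms(1) i unfolding is_tree_def by blast
  next
    case (3 k)
    then have "adj (xs ! k) (xs ! i)" using assms(2) i unfolding reduced_path_def by auto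
    then show ?thesis using assms(1) i unfolding is_tree_def by blast
  qed
qed

lemma is_tree_reduced_path_unique:
  "\<lbrakk>is_tree V adj; reduced_path adj xs x y; reduced_path adj ys x y; x \<in> V; y \<in> V\<rbrakk> \<Longrightarrow> xs = ys"
  unfolding is_tree_def by blast

lemma is_tree_reduced_path_exists:
  "\<lbrakk>is_tree V adj; x \<in> V; y \<in> V\<rbrakk> \<Longrightarrow> \<exists>xs. reduced_path adj xs x y"
  unfolding is_tree_def by blast

lemma is_subtree_reduced_path_subset:
  "\<lbrakk>is_subtree V adj S; x \<in> S; y \<in> S; reduced_path adj xs x y\<rbrakk> \<Longrightarrow> set xs \<subseteq> S"
  unfolding is_subtree_def by blast

definition shortest_bridge :: "('v \<Rightarrow> 'v \<Rightarrow> bool) \<Rightarrow> 'v set \<Rightarrow> 'v set \<Rightarrow> 'v list \<Rightarrow> bool" where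
  "shortest_bridge adj S1 S2 P \<longleftrightarrow>
     (\<exists>a\<in>S1. \<exists>b\<in>S2. reduced_path adj P a b) \<and>
     (\<forall>x\<in>S1. \<forall>y\<in>S2. \<forall>Q. reduced_path adj Q x y \<longrightarrow> length P \<le> length Q)"

lemma shortest_bridge_exists:
  assumes "is_tree V adj" "S1 \<noteq> {}" "S2 \<noteq> {}" "S1 \<subseteq> V" "S2 \<subseteq> V"
  shows "\<exists>P. shortest_bridge adj S1 S2 P"
proof -
  define bridge where "bridge Q \<longleftrightarrow> (\<exists>x\<in>S1. \<exists>y\<in>S2. reduced_path adj Q x y)" for Q
  obtain x y where xy: "x \<in> S1" "y \<in> S2" using assms(2,3) by blast
  then obtain Q where "reduced_path adj Q x y"
    using is_tree_reduced_path_exists[OF assms(1)] assms(4,5) by blast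
  then have "bridge Q" unfolding bridge_def using xy by blast
  then obtain P where "bridge P" "\<forall>Q. bridge Q \<longrightarrow> length P \<le> length Q"
    using ex_has_least_nat[of bridge Q length] by blast
  then show ?thesis unfolding shortest_bridge_def bridge_def by blast
qed

lemma shortest_bridge_leaves_ends:
  assumes "shortest_bridge adj S1 S2 P" "reduced_path adj P a b" "a \<in> S1" "b \<in> S2"
    "S1 \<inter> S2 = {}"
  shows "2 \<le> length P" "P ! 1 \<notin> S1" "P ! (length P - 2) \<notin> S2"
proof -
  have min: "length P \<le> length Q" if "x \<in> S1" "y \<in> S2" "reduced_path adj Q x y" for x y Q
    using assms(1) that unfolding shortest_bridge_def by blast
  show len: "2 \<le> length P" using reduced_path_length_ge2[OF assms(2)] assms(3-5) by blast
  show "P ! 1 \<notin> S1"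
    using min[OF _ assms(4) reduced_path_tl[OF assms(2) len]] len by fastforce
  show "P ! (length P - 2) \<notin> S2"
    using min[OF assms(3) _ reduced_path_butlast[OF assms(2) len]] len by fastforce
qed

text \<open>Between disjoint subtrees the shortest bridge is unique: prolonging it inside \<open>S1\<close> and
\<open>S2\<close> gives a longer reduced path between any other pair of endpoints.\<close>

lemma shortest_bridge_source_unique:
  assumes tree: "is_tree V adj" and S1: "is_subtree V adj S1" and S2: "is_subtree V adj S2"
    and disj: "S1 \<inter> S2 = {}" and P: "shortest_bridge adj S1 S2 P" "reduced_path adj P a b"
    and P': "reduced_path adj P' a' b'" "length P' = length P"
    and ends: "a \<in> S1" "a' \<in> S1" "b \<in> S2" "b' \<in> S2"
  shows "a' = a"
proof (rule ccontr)
  assume "a' \<noteq> a"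
  have sub: "S1 \<subseteq> V" "S2 \<subseteq> V" using S1 S2 unfolding is_subtree_def by auto
  have in_V: "a \<in> V" "a' \<in> V" "b \<in> V" "b' \<in> V" using ends sub by auto
  note leaves = shortest_bridge_leaves_ends[OF P ends(1,3) disj]
  obtain Q where Q: "reduced_path adj Q a' a" using is_tree_reduced_path_exists[OF tree] in_V by blast
  have lenQ: "2 \<le> length Q" using reduced_path_length_ge2[OF Q \<open>a' \<noteq> a\<close>] .
  have "Q ! (length Q - 2) \<in> S1"
    using is_subtree_reduced_path_subset[OF S1 ends(2,1) Q] lenQ by (simp add: subset_iff)
  then have "Q ! (length Q - 2) \<noteq> P ! 1" using leaves(2) by auto
  then have QP: "reduced_path adj (Q @ tl P) a' b"
    using reduced_path_append[OF Q P(2) lenQ leaves(1)] by simp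
  have longer: "length P < length (Q @ tl P)" using lenQ leaves(1) by simp
  show False
  proof (cases "b' = b")
    case True
    then show False
      using is_tree_reduced_path_unique[OF tree QP P'(1)[unfolded True]] in_V longer P'(2)
      by auto
  next
    case False
    obtain R where R: "reduced_path adj R b b'" using is_tree_reduced_path_exists[OF tree] in_V by blast
    have lenR: "2 \<le> length R" using reduced_path_length_ge2[OF R] False by auto
    have "R ! 1 \<in> S2"
      using is_subtree_reduced_path_subset[OF S2 ends(3,4) R] lenR by (simp add: subset_iff)
    moreover have "(Q @ tl P) ! (length (Q @ tl P) - 2) = P ! (length P - 2)"
      using nth_append_tl[of Q P "length (Q @ tl P) - 2"] Q P(2) lenQ leaves(1)
      unfolding reduced_path_def by auto
    ultimately have "(Q @ tl P) ! (length (Q @ tl P) - 2) \<noteq> R ! 1" using leaves(3) by auto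
    moreover have "2 \<le> length (Q @ tl P)" using leaves(1) longer by linarith
    ultimately have "reduced_path adj ((Q @ tl P) @ tl R) a' b'"
      using reduced_path_append[OF QP R _ lenR] by blast
    then show False
      using is_tree_reduced_path_unique[OF tree _ P'(1)] in_V longer P'(2) by force
  qed
qed

lemma fixpoint_free_invariant_subtrees_meet:
  assumes tree: "is_tree V adj" and S1: "is_subtree V adj S1" and S2: "is_subtree V adj S2"
    and f: "inj_on f V" "\<forall>x\<in>V. \<forall>y\<in>V. adj (f x) (f y) \<longleftrightarrow> adj x y"
    and invariant: "f ` S1 \<subseteq> S1" "f ` S2 \<subseteq> S2" and fixpoint_free: "\<forall>x\<in>V. f x \<noteq> x"
  shows "S1 \<inter> S2 \<noteq> {}"
proof
  assume disj: "S1 \<inter> S2 = {}"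
  have sub: "S1 \<subseteq> V" "S2 \<subseteq> V" and ne: "S1 \<noteq> {}" "S2 \<noteq> {}"
    using S1 S2 unfolding is_subtree_def by auto
  obtain P a b where P: "shortest_bridge adj S1 S2 P" "reduced_path adj P a b" "a \<in> S1" "b \<in> S2"
    using shortest_bridge_exists[OF tree ne sub] unfolding shortest_bridge_def by blast
  have "reduced_path adj (map f P) (f a) (f b)"
    using reduced_path_map[OF f reduced_path_subset[OF tree P(2)] P(2)] P(3) sub by blast
  then have "f a = a"
    using shortest_bridge_source_unique[OF tree S1 S2 disj P(1,2)] P(3,4) invariant
    by (metis image_subset_iff length_map)
  then show False using fixpoint_free P(3) sub by blast
qed

lemma min_invariant_subtree_subset:
  assumes action: "tree_action G V adj \<phi>" and A: "subgroup A G" and "\<exists>h\<in>A. hyperbolic G V \<phi> h"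
    and T: "min_invariant_subtree V adj A \<phi> T"
    and S: "is_subtree V adj S" "invariant_set A \<phi> S"
  shows "T \<subseteq> S"
proof -
  obtain h where h: "h \<in> A" "hyperbolic G V \<phi> h" using assms(3) by blast
  have hG: "h \<in> carrier G" using subgroup.mem_carrier[OF A h(1)] .
  have T_sub: "is_subtree V adj T" and T_inv: "invariant_set A \<phi> T"
    using T unfolding min_invariant_subtree_def by auto
  have "T \<inter> S \<noteq> {}"
  proof (rule fixpoint_free_invariant_subtrees_meet)
    show "is_tree V adj" "inj_on (\<phi> h) V"
      using action group_action.inj_prop[OF _ hG] unfolding tree_action_def by auto
    show "\<forall>x\<in>V. \<forall>y\<in>V. adj (\<phi> h x) (\<phi> h y) \<longleftrightarrow> adj x y"
      using action hG unfolding tree_action_def by blast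
    show "\<phi> h ` T \<subseteq> T" "\<phi> h ` S \<subseteq> S"
      using T_inv S(2) h(1) unfolding invariant_set_def by auto
    show "\<forall>x\<in>V. \<phi> h x \<noteq> x" using h(2) unfolding hyperbolic_def by blast
  qed (use T_sub S(1) in auto)
  moreover have "is_subtree V adj (T \<inter> S) \<Longrightarrow> invariant_set A \<phi> (T \<inter> S) \<Longrightarrow> T \<inter> S = T"
    using T unfolding min_invariant_subtree_def by blast
  ultimately show ?thesis
    using T_sub T_inv S unfolding is_subtree_def invariant_set_def by blast
qed

lemma ecard_mono: "S \<subseteq> T \<Longrightarrow> ecard S \<le> ecard T"
  unfolding ecard_def by (auto intro: card_mono dest: finite_subset)

lemma ecard_image_Times_le: "ecard (f ` (X \<times> Y)) \<le> ecard X * ecard Y"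
proof (cases "X = {} \<or> Y = {}")
  case True
  then have "ecard (f ` (X \<times> Y)) = 0" by (auto simp: ecard_def zero_enat_def)
  then show ?thesis by simp
next
  case nonempty: False
  show ?thesis
  proof (cases "finite X \<and> finite Y")
    case True
    then have "card (f ` (X \<times> Y)) \<le> card X * card Y"
      using card_image_le[of "X \<times> Y" f] by (simp add: card_cartesian_product)
    then show ?thesis using True unfolding ecard_def by simp
  next
    case False
    moreover have "0 < ecard X" "0 < ecard Y"
      using nonempty unfolding ecard_def by (auto simp: card_gt_0_iff zero_enat_def)
    ultimately have "ecard X * ecard Y = \<infinity>"
      by (metis ecard_def imult_infinity imult_infinity_right)
    then show ?thesis by simp
  qed
qed

context group_action
begin

lemma act_one: "x \<in> E \<Longrightarrow> \<phi> \<one> x = x"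
  using id_eq_one by (metis restrict_apply')

lemma act_act_inv:
  assumes "g \<in> carrier G" "x \<in> E"
  shows "\<phi> g (\<phi> (inv g) x) = x"
proof -
  interpret group G using group_hom group_hom.axioms(1) by blast
  show ?thesis using orbit_sym_aux[of "inv g" x] assms by simp
qed

lemma eorbit_refl:
  assumes "subgroup H G" "x \<in> E" "y \<in> E"
  shows "(x, y) \<in> eorbit H \<phi> (x, y)"
proof -
  have "\<one> \<in> H" using subgroup.one_closed[OF assms(1)] .
  then show ?thesis unfolding eorbit_def using act_one assms(2,3) by force
qed

lemma eorbit_act_subset:
  assumes H: "subgroup H G" and a: "a \<in> H" and xy: "x \<in> E" "y \<in> E"
  shows "eorbit H \<phi> (\<phi> a x, \<phi> a y) \<subseteq> eorbit H \<phi> (x, y)"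
proof
  fix e assume "e \<in> eorbit H \<phi> (\<phi> a x, \<phi> a y)"
  then obtain c where c: "c \<in> H" "e = (\<phi> c (\<phi> a x), \<phi> c (\<phi> a y))"
    unfolding eorbit_def by auto
  have "e = (\<phi> (c \<otimes> a) x, \<phi> (c \<otimes> a) y)"
    using composition_rule xy c subgroup.mem_carrier[OF H] a by auto
  moreover have "c \<otimes> a \<in> H" using subgroup.m_closed[OF H c(1) a] .
  ultimately show "e \<in> eorbit H \<phi> (x, y)" unfolding eorbit_def by auto
qed

lemma eorbit_act:
  assumes H: "subgroup H G" and a: "a \<in> H" and xy: "x \<in> E" "y \<in> E"
  shows "eorbit H \<phi> (\<phi> a x, \<phi> a y) = eorbit H \<phi> (x, y)"
proof
  have aG: "a \<in> carrier G" using subgroup.mem_carrier[OF H a] .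
  have "inv a \<in> H" using subgroup.m_inv_closed[OF H a] .
  moreover have "\<phi> a x \<in> E" "\<phi> a y \<in> E" using element_image aG xy by auto
  ultimately have "eorbit H \<phi> (\<phi> (inv a) (\<phi> a x), \<phi> (inv a) (\<phi> a y)) \<subseteq> eorbit H \<phi> (\<phi> a x, \<phi> a y)"
    using eorbit_act_subset[OF H] by blast
  then show "eorbit H \<phi> (x, y) \<subseteq> eorbit H \<phi> (\<phi> a x, \<phi> a y)"
    using orbit_sym_aux aG xy by simp
qed (rule eorbit_act_subset[OF assms])

lemma eorbit_eq_imp_stabilizer:
  assumes "subgroup H G" "x \<in> E" "y' \<in> E" "eorbit H \<phi> (x, y) = eorbit H \<phi> (x, y')"
  obtains h where "h \<in> H" "\<phi> h x = x" "\<phi> h y = y'"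
proof -
  have "(x, y') \<in> eorbit H \<phi> (x, y)" using eorbit_refl[OF assms(1-3)] assms(4) by simp
  then show ?thesis using that unfolding eorbit_def by auto
qed

lemma qmap_edge_eorbit:
  assumes "subgroup A G" "subgroup B G" "A \<subseteq> B" "x \<in> E" "y \<in> E"
  shows "qmap_edge B \<phi> (eorbit A \<phi> (x, y)) = eorbit B \<phi> (x, y)"
proof -
  have "eorbit B \<phi> e = eorbit B \<phi> (x, y)" if e: "e \<in> eorbit A \<phi> (x, y)" for e
  proof -
    obtain a where "a \<in> A" "e = (\<phi> a x, \<phi> a y)" using e unfolding eorbit_def by auto
    then show ?thesis using eorbit_act[OF assms(2) _ assms(4,5), of a] assms(3) by auto
  qed
  moreover have "eorbit A \<phi> (x, y) \<noteq> {}" using eorbit_refl assms by blast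
  ultimately show ?thesis unfolding qmap_edge_def by auto
qed

lemma qstar_obtain_at:
  assumes H: "subgroup H G"
    and adj: "\<forall>g\<in>carrier G. \<forall>x\<in>E. \<forall>y\<in>E. adj (\<phi> g x) (\<phi> g y) \<longleftrightarrow> adj x y"
    and S: "S \<subseteq> E" "invariant_set H \<phi> S" and v: "v \<in> E"
    and e: "e \<in> qstar adj H \<phi> S v"
  obtains y where "y \<in> S" "adj v y" "e = eorbit H \<phi> (v, y)"
proof -
  obtain x y a where xy: "x \<in> S" "y \<in> S" "adj x y" "a \<in> H" "x = \<phi> a v"
    and e_eq: "e = eorbit H \<phi> (x, y)"
    using e unfolding qstar_def vorbit_def by auto
  have aG: "a \<in> carrier G" using subgroup.mem_carrier[OF H xy(4)] .
  define y' where "y' = \<phi> (inv\<^bsub>G\<^esub> a) y"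
  have "y' \<in> S" using S(2) subgroup.m_inv_closed[OF H xy(4)] xy(2)
    unfolding invariant_set_def y'_def by blast
  moreover have y: "\<phi> a y' = y" unfolding y'_def using act_act_inv aG xy(2) S(1) by blast
  moreover have "adj v y'" using adj aG v xy(3,5) y \<open>y' \<in> S\<close> S(1) by blast
  moreover have "e = eorbit H \<phi> (v, y')"
    using eorbit_act[OF H xy(4) v] e_eq xy(5) y \<open>y' \<in> S\<close> S(1) by auto
  ultimately show ?thesis using that by blast
qed

lemma eorbit_in_qstar:
  assumes "subgroup H G" "v \<in> S" "y \<in> S" "adj v y" "S \<subseteq> E"
  shows "eorbit H \<phi> (v, y) \<in> qstar adj H \<phi> S v"
proof -
  have "\<one> \<in> H" using subgroup.one_closed[OF assms(1)] .
  then have "v \<in> vorbit H \<phi> v" unfolding vorbit_def using act_one assms(2,5) by force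
  then show ?thesis unfolding qstar_def using assms(2-4) by blast
qed

lemma ecard_qstar_le:
  assumes A: "subgroup A G" and B: "subgroup B G"
    and adj: "\<forall>g\<in>carrier G. \<forall>x\<in>E. \<forall>y\<in>E. adj (\<phi> g x) (\<phi> g y) \<longleftrightarrow> adj x y"
    and TA: "TA \<subseteq> TB" "invariant_set A \<phi> TA" and TB: "TB \<subseteq> E" "invariant_set B \<phi> TB"
    and v: "v \<in> TA"
  shows "ecard (qstar adj A \<phi> TA v) \<le> ecard (stabilizer G \<phi> v \<inter> B) * ecard (qstar adj B \<phi> TB v)"
proof -
  have vE: "v \<in> E" using v TA(1) TB(1) by blast
  have "\<exists>y. y \<in> TB \<and> s = eorbit B \<phi> (v, y)" if "s \<in> qstar adj B \<phi> TB v" for s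
    using qstar_obtain_at[OF B adj TB vE that] by blast
  then obtain r where r: "\<And>s. s \<in> qstar adj B \<phi> TB v \<Longrightarrow> r s \<in> TB \<and> s = eorbit B \<phi> (v, r s)"
    by metis
  let ?cover = "(\<lambda>(b, s). eorbit A \<phi> (v, \<phi> b (r s))) ` ((stabilizer G \<phi> v \<inter> B) \<times> qstar adj B \<phi> TB v)"
  have "qstar adj A \<phi> TA v \<subseteq> ?cover"
  proof
    fix e assume "e \<in> qstar adj A \<phi> TA v"
    moreover have "TA \<subseteq> E" using TA(1) TB(1) by blast
    ultimately obtain y where y: "y \<in> TA" "adj v y" "e = eorbit A \<phi> (v, y)"
      using qstar_obtain_at[OF A adj _ TA(2) vE] by blast
    define s where "s = eorbit B \<phi> (v, y)"
    have s: "s \<in> qstar adj B \<phi> TB v"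
      unfolding s_def using eorbit_in_qstar[OF B] v y(1,2) TA(1) TB(1) by blast
    moreover have "y \<in> E" using y(1) TA(1) TB(1) by blast
    moreover have "eorbit B \<phi> (v, r s) = eorbit B \<phi> (v, y)" using r[OF s] s_def by simp
    ultimately obtain b where b: "b \<in> B" "\<phi> b v = v" "\<phi> b (r s) = y"
      using eorbit_eq_imp_stabilizer[OF B vE] by blast
    then have "b \<in> stabilizer G \<phi> v \<inter> B"
      unfolding stabilizer_def using subgroup.mem_carrier[OF B] by blast
    then show "e \<in> ?cover" using s y(3) b(3) by force
  qed
  then have "ecard (qstar adj A \<phi> TA v) \<le> ecard ?cover" by (rule ecard_mono)
  also have "\<dots> \<le> ecard (stabilizer G \<phi> v \<inter> B) * ecard (qstar adj B \<phi> TB v)"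
    by (rule ecard_image_Times_le)
  finally show ?thesis .
qed

lemma inj_on_qmap_edge_qstar:
  assumes A: "subgroup A G" and B: "subgroup B G" and AB: "A \<subseteq> B"
    and adj: "\<forall>g\<in>carrier G. \<forall>x\<in>E. \<forall>y\<in>E. adj (\<phi> g x) (\<phi> g y) \<longleftrightarrow> adj x y"
    and T: "T \<subseteq> E" "invariant_set A \<phi> T" and v: "v \<in> E"
    and fixes_edges: "\<forall>y\<in>T. adj v y \<longrightarrow> vstab B \<phi> v \<subseteq> estab B \<phi> (v, y)"
  shows "inj_on (qmap_edge B \<phi>) (qstar adj A \<phi> T v)"
proof
  fix e1 e2
  assume e: "e1 \<in> qstar adj A \<phi> T v" "e2 \<in> qstar adj A \<phi> T v"
    and eq: "qmap_edge B \<phi> e1 = qmap_edge B \<phi> e2"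
  obtain y1 where y1: "y1 \<in> T" "adj v y1" "e1 = eorbit A \<phi> (v, y1)"
    using qstar_obtain_at[OF A adj T v e(1)] .
  obtain y2 where y2: "y2 \<in> T" "e2 = eorbit A \<phi> (v, y2)"
    using qstar_obtain_at[OF A adj T v e(2)] .
  have y_E: "y1 \<in> E" "y2 \<in> E" using y1(1) y2(1) T(1) by auto
  have "eorbit B \<phi> (v, y1) = eorbit B \<phi> (v, y2)"
    using eq unfolding y1(3) y2(2) qmap_edge_eorbit[OF A B AB v y_E(1)] qmap_edge_eorbit[OF A B AB v y_E(2)] .
  then obtain b where b: "b \<in> B" "\<phi> b v = v" "\<phi> b y1 = y2"
    using eorbit_eq_imp_stabilizer[OF B v y_E(2)] by blast
  then have "b \<in> estab B \<phi> (v, y1)" using fixes_edges y1(1,2) unfolding vstab_def by blast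
  then show "e1 = e2" using b(3) y1(3) y2(2) unfolding estab_def by simp
qed

end

theorem lemma3p2:
  fixes G :: "('g, 'm) monoid_scheme" (structure)
    and V :: "'v set" and adj :: "'v \<Rightarrow> 'v \<Rightarrow> bool" and \<phi> :: "'g \<Rightarrow> 'v \<Rightarrow> 'v"
    and A B :: "'g set" and TA TB :: "'v set" and v :: 'v
  assumes "group G"
    and "tree_action G V adj \<phi>"
    and "without_inversions G adj \<phi>"
    and "subgroup A G" and "subgroup B G" and "A \<subseteq> B"
    and "\<exists>a\<in>A. hyperbolic G V \<phi> a"
    and "\<exists>b\<in>B. hyperbolic G V \<phi> b"
    and "min_invariant_subtree V adj A \<phi> TA"
    and "min_invariant_subtree V adj B \<phi> TB"
    and "v \<in> TA"
  shows "(finite (qstar adj A \<phi> TA v) \<and> finite (qstar adj B \<phi> TB v) \<longrightarrow>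
           ecard (qstar adj A \<phi> TA v)
             \<le> ecard (stabilizer G \<phi> v \<inter> B) * ecard (qstar adj B \<phi> TB v))
       \<and> (finite (qstar adj A \<phi> TA v) \<and> finite (qstar adj B \<phi> TB v)
           \<and> degenerate adj B \<phi> TB v
           \<and> (\<forall>y\<in>TB. adj v y \<longrightarrow> vstab B \<phi> v \<subseteq> estab B \<phi> (v, y)) \<longrightarrow>
           inj_on (qmap_edge B \<phi>) (qstar adj A \<phi> TA v))"
proof -
  have action: "group_action G V \<phi>"
    and adj: "\<forall>g\<in>carrier G. \<forall>x\<in>V. \<forall>y\<in>V. adj (\<phi> g x) (\<phi> g y) \<longleftrightarrow> adj x y"
    using assms(2) unfolding tree_action_def by auto
  have TA: "TA \<subseteq> V" "invariant_set A \<phi> TA"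
    using assms(9) unfolding min_invariant_subtree_def is_subtree_def by auto
  have TB: "is_subtree V adj TB" "TB \<subseteq> V" "invariant_set B \<phi> TB"
    using assms(10) unfolding min_invariant_subtree_def is_subtree_def by auto
  then have "invariant_set A \<phi> TB" using assms(6) unfolding invariant_set_def by blast
  then have TA_TB: "TA \<subseteq> TB" using min_invariant_subtree_subset[OF assms(2,4,7,9) TB(1)] by blast
  have "v \<in> V" using assms(11) TA(1) by blast
  have inj: "inj_on (qmap_edge B \<phi>) (qstar adj A \<phi> TA v)"
    if "\<forall>y\<in>TB. adj v y \<longrightarrow> vstab B \<phi> v \<subseteq> estab B \<phi> (v, y)"
    using group_action.inj_on_qmap_edge_qstar[OF action assms(4-6) adj TA \<open>v \<in> V\<close>] that TA_TB
    by blast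
  show ?thesis
    using group_action.ecard_qstar_le[OF action assms(4,5) adj TA_TB TA(2) TB(2,3) assms(11)] inj
    by blast
qed

end
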